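(* Let $a\in\mathbb{R}$, $N\ge1$, $\mathfrak D_{z,a}=(z-a)\partial_z^2-(2(z-a)^2+2)\partial_z-2(z-a)$ and $$\widehat G_N(z,w)=((z-a)(w-a))^3e^{-2(z+w)a}\sum_{k=0}^{N-1}\frac{q_{2k+1}^{(\mathrm{pre})}(z)q_{2k}^{(\mathrm{pre})}(w)}{r_k^{(\mathrm{pre})}}.$$ Then $$\frac{8e^{2wa}}{(z-a)^3(w-a)^3}\mathfrak D_{z,a}\widehat G_N(z,w)=\partial_z\Big[e^{-2za}\sum_{k=0}^{N-1}\frac{2^{2k+5}q_{2k}^{(\mathrm{pre})}(w)}{(2k+2)!f_{k+1}(a^2)}\Big(4f_k(a^2)\frac{(2k+2)!e_{2k+2}(2za)}{(2a)^{2k+3}}+(2k+2)f_{k+1}(a^2)z^{2k+1}-2f_k(a^2)z^{2k+3}\Big)\Big]$$ and $$\frac{8e^{2wa}}{(z-a)^3(w-a)^3}\mathfrak D_{z,a}\widehat G_N(w,z)=\partial_z\Big[e^{-2za}\sum_{k=0}^{N-1}\frac{2^{2k+4}q_{2k+1}^{(\mathrm{pre})}(w)}{(2k+2)!f_{k+1}(a^2)}\Big(8\frac{(2k+2)!\,a\,e_{k+1}(a^2)}{(2a)^{2k+3}}e_{2k+2}(2za)-4f_{k+1}(a^2)z^{2k+2}\Big)\Big].$$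
   Context: $e_k(x)=\sum_{j=0}^kx^j/j!$, $f_k(x)=(k+1)e_k(x)-xe_{k-1}(x)$ (with $e_{-1}\equiv0$). The polynomials are $q_{2k}^{(\mathrm{pre})}(z)=\sum_{j=0}^{2k}\alpha_{2k,j}z^j$, $q_{2k+1}^{(\mathrm{pre})}(z)=\sum_{j=0}^{2k+1}\beta_{2k+1,j}z^j$ with, writing $c_{j,k}=\frac{2^jf_j(a^2)}{2^kf_k(a^2)}$: $\alpha_{2k,2j}=c_{j,k}\big[\sum_{\ell=j}^k(\ell+1-j)\frac{(2k+3)!!}{(2\ell+3)!!}(2a^2)^{\ell-j}-\sum_{\ell=j}^k(\ell-j)\frac{(2k+1)!!}{(2\ell+1)!!}(2a^2)^{\ell-j}\big]$ ($0\le j\le k$); $\alpha_{2k,2j+1}=2a\,c_{j,k}\big[\sum_{\ell=j}^{k-1}(\ell+1-j)\frac{(2k+3)!!}{(2\ell+5)!!}(2a^2)^{\ell-j}-\sum_{\ell=j}^{k-1}(\ell-j)\frac{(2k+1)!!}{(2\ell+3)!!}(2a^2)^{\ell-j}\big]$ ($0\le j\le k-1$); $\beta_{2k+1,2j}=a\,c_{j,k}\big[\frac{2j+1}{2k+3}(2a^2)^{k-j}+2\sum_{\ell=j}^k(\ell+1-j)\frac{(2k+1)!!}{(2\ell+3)!!}(2a^2)^{\ell-j}\big]$; $\beta_{2k+1,2j+1}=c_{j,k}\big[\frac{2j+3}{2k+3}(2a^2)^{k-j}+2\sum_{\ell=j}^k(\ell-j)\frac{(2k+1)!!}{(2\ell+3)!!}(2a^2)^{\ell-j}\big]$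 ($0\le j\le k$); and $r_k^{(\mathrm{pre})}=\frac{(2k+2)!}{2^{2k+2}}\frac{f_{k+1}(a^2)}{f_k(a^2)}$. *)

theory Defs
  imports "HOL-Analysis.Analysis"
begin

definition etrunc :: "nat \<Rightarrow> 'a::real_normed_field \<Rightarrow> 'a" where
  "etrunc k x = (\<Sum>j\<le>k. x ^ j / of_nat (fact j))"

definition ftrunc :: "nat \<Rightarrow> real \<Rightarrow> real" where
  "ftrunc k x = real (k + 1) * etrunc k x - (if k = 0 then 0 else x * etrunc (k - 1) x)"

fun dfact :: "nat \<Rightarrow> nat" where
  "dfact 0 = 1"
| "dfact (Suc 0) = 1"
| "dfact (Suc (Suc n)) = (n + 2) * dfact n"

definition cco :: "real \<Rightarrow> nat \<Rightarrow> nat \<Rightarrow> real" where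
  "cco a j k = (2 ^ j * ftrunc j (a^2)) / (2 ^ k * ftrunc k (a^2))"

definition alpha :: "real \<Rightarrow> nat \<Rightarrow> nat \<Rightarrow> real" where
  "alpha a k i =
    (if even i then
       (let j = i div 2 in
        cco a j k *
          ((\<Sum>l=j..k. real (l + 1 - j) * (real (dfact (2*k+3)) / real (dfact (2*l+3))) * (2*a^2) ^ (l - j))
         - (\<Sum>l=j..k. real (l - j) * (real (dfact (2*k+1)) / real (dfact (2*l+1))) * (2*a^2) ^ (l - j))))
     else
       (let j = i div 2 in
        2 * a * cco a j k *
          ((\<Sum>l=j..<k. real (l + 1 - j) * (real (dfact (2*k+3)) / real (dfact (2*l+5))) * (2*a^2) ^ (l - j))
         - (\<Sum>l=j..<k. real (l - j) * (real (dfact (2*k+1)) / real (dfact (2*l+3))) * (2*a^2) ^ (l - j)))))"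

definition beta :: "real \<Rightarrow> nat \<Rightarrow> nat \<Rightarrow> real" where
  "beta a k i =
    (if even i then
       (let j = i div 2 in
        a * cco a j k *
          (real (2*j+1) / real (2*k+3) * (2*a^2) ^ (k - j)
           + 2 * (\<Sum>l=j..k. real (l + 1 - j) * (real (dfact (2*k+1)) / real (dfact (2*l+3))) * (2*a^2) ^ (l - j))))
     else
       (let j = i div 2 in
        cco a j k *
          (real (2*j+3) / real (2*k+3) * (2*a^2) ^ (k - j)
           + 2 * (\<Sum>l=j..k. real (l - j) * (real (dfact (2*k+1)) / real (dfact (2*l+3))) * (2*a^2) ^ (l - j)))))"

definition qeven :: "real \<Rightarrow> nat \<Rightarrow> complex \<Rightarrow> complex" where
  "qeven a k z = (\<Sum>i\<le>2*k. of_real (alpha a k i) * z ^ i)"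

definition qodd :: "real \<Rightarrow> nat \<Rightarrow> complex \<Rightarrow> complex" where
  "qodd a k z = (\<Sum>i\<le>2*k+1. of_real (beta a k i) * z ^ i)"

definition rpre :: "real \<Rightarrow> nat \<Rightarrow> real" where
  "rpre a k = fact (2*k+2) / 2 ^ (2*k+2) * (ftrunc (k+1) (a^2) / ftrunc k (a^2))"

definition Ghat :: "real \<Rightarrow> nat \<Rightarrow> complex \<Rightarrow> complex \<Rightarrow> complex" where
  "Ghat a N z w = ((z - of_real a) * (w - of_real a)) ^ 3 * exp (- 2 * (z + w) * of_real a) *
     (\<Sum>k<N. qodd a k z * qeven a k w / of_real (rpre a k))"

definition Dop :: "real \<Rightarrow> (complex \<Rightarrow> complex) \<Rightarrow> complex \<Rightarrow> complex" where
  "Dop a g z = (z - of_real a) * deriv (deriv g) z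
              - (2 * (z - of_real a)^2 + 2) * deriv g z
              - 2 * (z - of_real a) * g z"

end

theory Submission
  imports Defs "HOL-Computational_Algebra.Polynomial"
begin

text \<open>
  Both left-hand sides have the form e^(-2a\<zeta>) (\<zeta>-a)^3 P(\<zeta>) with P a polynomial, and conjugating
  D_{z,a} by this weight gives a second-order operator L with polynomial coefficients. So both
  identities reduce to computing L q_{2k+1} and L q_{2k}, and to checking that e^(-2a\<zeta>) times each
  bracket on the right-hand side is a primitive of e^(-2a\<zeta>) times that polynomial.

  Once the sums defining \<alpha> and \<beta> are evaluated by summation by parts, the coefficients of both
  polynomials are, up to a constant factor, of the paired form c_{2j} = g_j y_j, c_{2j+1} = 2a g_j y_{j+1}
  with g_j = 2^j f_j(a^2), where y_j = (2j+5+2a^2) y_{j+1} - (2j+3) 2a^2 y_{j+2} for j < k. With the three-term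
  recurrence of f_j this makes L annihilate all coefficients below degree 2k, so L q has just four
  terms, which are read off from y_k and y_{k+1}.
\<close>

section \<open>Sums over odd double factorials\<close>

lemma dfact_pos: "0 < dfact n"
  by (induction n rule: dfact.induct) auto

definition odd_dfact :: "nat \<Rightarrow> real" where
  "odd_dfact l = real (dfact (2*l+1))"

lemma odd_dfact_nonzero [simp]: "odd_dfact l \<noteq> 0"
  using dfact_pos[of "2*l+1"] by (simp add: odd_dfact_def)

lemma odd_dfact_Suc: "odd_dfact (Suc l) = (2 * real l + 3) * odd_dfact l"
proof -
  have "2 * Suc l + 1 = Suc (Suc (2*l+1))" by simp
  then show ?thesis by (simp add: odd_dfact_def algebra_simps)
qed

lemma inverse_odd_dfact: "1 / odd_dfact l = (2 * real l + 3) / odd_dfact (Suc l)"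
  by (simp add: odd_dfact_Suc)

lemma odd_dfact_div_Suc: "odd_dfact k / odd_dfact (Suc k) = 1 / (2*real k + 3)"
  by (simp add: odd_dfact_Suc)

lemma dfact_odd_dfact:
  "real (dfact (2*l+1)) = odd_dfact l"
  "real (dfact (2*l+3)) = odd_dfact (Suc l)"
  "real (dfact (2*l+5)) = odd_dfact (Suc (Suc l))"
  by (simp_all add: odd_dfact_def numeral_eq_Suc)

definition dfact_sum :: "real \<Rightarrow> nat \<Rightarrow> nat \<Rightarrow> real" where
  "dfact_sum t j k = (\<Sum>l=j..k. t^(l-j) / odd_dfact (Suc l))"

definition dfact_sum_lin :: "real \<Rightarrow> nat \<Rightarrow> nat \<Rightarrow> real" where
  "dfact_sum_lin t j k = (\<Sum>l=j..k. real (l-j) * t^(l-j) / odd_dfact (Suc l))"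

lemma sum_split_first:
  assumes "j \<le> k"
  shows "(\<Sum>l=j..k. f l (l-j)) = f j 0 + (\<Sum>l=Suc j..k. f l (Suc (l - Suc j)))"
proof -
  have "(\<Sum>l=j..k. f l (l-j)) = f j 0 + (\<Sum>l=Suc j..k. f l (l-j))"
    using assms by (simp add: sum.atLeast_Suc_atMost)
  also have "(\<Sum>l=Suc j..k. f l (l-j)) = (\<Sum>l=Suc j..k. f l (Suc (l - Suc j)))"
    by (rule sum.cong) (auto simp: Suc_diff_Suc)
  finally show ?thesis .
qed

lemma dfact_sum_shift:
  "j \<le> k \<Longrightarrow> dfact_sum t j k = 1 / odd_dfact (Suc j) + t * dfact_sum t (Suc j) k"
  unfolding dfact_sum_def
  by (subst sum_split_first[where f = "\<lambda>l i. t^i / odd_dfact (Suc l)"]) (simp_all add: sum_distrib_left mult_ac)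

lemma dfact_sum_lin_shift:
  "j \<le> k \<Longrightarrow> dfact_sum_lin t j k = t * (dfact_sum_lin t (Suc j) k + dfact_sum t (Suc j) k)"
  unfolding dfact_sum_lin_def dfact_sum_def
  by (subst sum_split_first[where f = "\<lambda>l i. real i * t^i / odd_dfact (Suc l)"])
     (simp_all add: sum_distrib_left sum.distrib[symmetric], intro sum.cong, simp_all add: field_simps)

lemma dfact_sum_lin_closed:
  assumes "j \<le> k"
  shows "2 * dfact_sum_lin t j k
    = (t - (2 * real j + 3)) * dfact_sum t j k + 1 / odd_dfact j - t^(Suc k - j) / odd_dfact (Suc k)"
  using assms
proof (induction j rule: inc_induct)
  case base
  then show ?case
    by (simp add: dfact_sum_lin_def dfact_sum_def inverse_odd_dfact[of k] diff_divide_distrib)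
next
  case (step j)
  have jk: "j \<le> k"
    using step.hyps by simp
  have pow: "t^(Suc k - j) = t * t^(Suc k - Suc j)"
    using step.hyps by (simp add: Suc_diff_le)
  have "2 * dfact_sum_lin t j k = t * (2 * dfact_sum_lin t (Suc j) k) + 2 * t * dfact_sum t (Suc j) k"
    by (simp add: dfact_sum_lin_shift[OF jk] algebra_simps)
  also have "\<dots> = t * ((t - (2 * real j + 5)) * dfact_sum t (Suc j) k
      + 1 / odd_dfact (Suc j) - t^(Suc k - Suc j) / odd_dfact (Suc k)) + 2 * t * dfact_sum t (Suc j) k"
    by (simp add: step.IH)
  also have "\<dots> = (t - (2 * real j + 3)) * dfact_sum t j k + 1 / odd_dfact j - t^(Suc k - j) / odd_dfact (Suc k)"
    unfolding dfact_sum_shift[OF jk] pow inverse_odd_dfact[of j]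
    by (simp add: algebra_simps add_divide_distrib diff_divide_distrib)
  finally show ?case .
qed

lemma dfact_sum_lin_index_down:
  assumes "j \<le> k"
  shows "(\<Sum>l=j..k. real (l-j) * t^(l-j) / odd_dfact l)
    = t * (dfact_sum_lin t j k + dfact_sum t j k) - real (Suc k - j) * t^(Suc k - j) / odd_dfact (Suc k)"
  using assms
proof (induction k rule: dec_induct)
  case base
  then show ?case by (simp add: dfact_sum_lin_def dfact_sum_def)
next
  case (step k)
  have "t^(Suc (Suc k) - j) = t * t^(Suc k - j)" "t^(Suc k - j) = t * t^(k - j)"
    using step.hyps by (simp_all add: Suc_diff_le)
  with step show ?case
    by (simp add: dfact_sum_lin_def dfact_sum_def of_nat_diff field_simps)
qed

lemma dfact_sum_lin_index_up:
  assumes "j \<le> k"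
  shows "t * (\<Sum>l=j..<k. real (l+1-j) * t^(l-j) / odd_dfact (Suc (Suc l))) = dfact_sum_lin t j k"
  using assms
proof (induction k rule: dec_induct)
  case base
  then show ?case by (simp add: dfact_sum_lin_def)
next
  case (step k)
  have "t^(Suc k - j) = t * t^(k - j)"
    using step.hyps by (simp add: Suc_diff_le)
  with step show ?case
    by (simp add: dfact_sum_lin_def distrib_left)
qed

lemma dfact_sum_lin_lessThan:
  assumes "j \<le> k"
  shows "(\<Sum>l=j..<k. real (l-j) * t^(l-j) / odd_dfact (Suc l))
    = dfact_sum_lin t j k - real (k-j) * t^(k-j) / odd_dfact (Suc k)"
  using assms by (simp add: dfact_sum_lin_def atLeastLessThanSuc_atLeastAtMost[symmetric])

section \<open>Truncated exponentials\<close>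

lemma etrunc_Suc: "etrunc (Suc k) x = etrunc k x + x^(Suc k) / of_nat (fact (Suc k))"
  unfolding etrunc_def sum.atMost_Suc ..

lemma etrunc_Suc_scaled:
  fixes x :: real
  shows "(real k + 1) * etrunc (Suc k) x = ftrunc k x + x * etrunc k x"
proof (cases k)
  case 0
  then show ?thesis by (simp add: ftrunc_def etrunc_def)
next
  case (Suc i)
  have "(real k + 1) * (x^(Suc k) / fact (Suc k)) = x * (x^k / fact k)"
    by (simp add: divide_simps)
  then show ?thesis
    using Suc by (simp add: etrunc_Suc ftrunc_def algebra_simps)
qed

lemma ftrunc_Suc: "ftrunc (Suc k) x = ftrunc k x + etrunc (Suc k) x"
  using etrunc_Suc_scaled[of k x] by (simp add: ftrunc_def algebra_simps)

lemma ftrunc_recurrence: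
  "(real k + 2) * ftrunc (k+2) x = (real k + 3 + x) * ftrunc (k+1) x - x * ftrunc k x"
  using etrunc_Suc_scaled[of "Suc k" x] ftrunc_Suc[of "Suc k" x] ftrunc_Suc[of k x]
  by (simp add: algebra_simps)

lemma etrunc_ge_1: "0 \<le> x \<Longrightarrow> 1 \<le> etrunc k (x::real)"
  by (induction k) (auto simp: etrunc_Suc etrunc_def[of 0] intro!: add_increasing2)

lemma ftrunc_ge_1: "0 \<le> x \<Longrightarrow> 1 \<le> ftrunc k x"
proof (induction k)
  case 0
  then show ?case by (simp add: ftrunc_def etrunc_def)
next
  case (Suc k)
  then show ?case using etrunc_ge_1[of x "Suc k"] by (simp add: ftrunc_Suc)
qed

lemma ftrunc_sq_nonzero: "ftrunc k (a^2) \<noteq> 0"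
  using ftrunc_ge_1[of "a^2" k] by simp

definition fscaled :: "real \<Rightarrow> nat \<Rightarrow> real" where
  "fscaled a j = 2^j * ftrunc j (a^2)"

lemma fscaled_nonzero [simp]: "fscaled a j \<noteq> 0"
  using ftrunc_sq_nonzero[of j a] by (simp add: fscaled_def)

lemma cco_fscaled: "cco a j k = fscaled a j / fscaled a k"
  by (simp add: cco_def fscaled_def)

lemma fscaled_0: "fscaled a 0 = 1"
  by (simp add: fscaled_def ftrunc_def etrunc_def)

lemma fscaled_1: "fscaled a (Suc 0) = 2 * (2 + a^2)"
  by (simp add: fscaled_def ftrunc_def etrunc_def)

lemma fscaled_rec:
  "(real j + 2) * fscaled a (Suc (Suc j)) = (2 * real j + 6 + 2*a^2) * fscaled a (Suc j) - 4*a^2 * fscaled a j"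
  using arg_cong[OF ftrunc_recurrence[of j "a^2"], of "\<lambda>x. 4 * 2^j * x"]
  by (simp add: fscaled_def algebra_simps)

section \<open>The conjugated operator on coefficient sequences\<close>

definition Lcoeff :: "real \<Rightarrow> (nat \<Rightarrow> real) \<Rightarrow> nat \<Rightarrow> real" where
  "Lcoeff a c n = - a * (real n + 2) * (real n + 1) * c (n+2) + (real n + 1) * (real n + 4 + 2*a^2) * c (n+1)
     - (if 1 \<le> n then (2 * real n + 6 + 4*a^2) * c (n-1) else 0) + (if 2 \<le> n then 4 * a * c (n-2) else 0)"

lemma Lcoeff_0: "Lcoeff a c 0 = - 2 * a * c (2*Suc 0) + (4 + 2*a^2) * c (Suc (2*0))"
proof -
  have idx: "(0::nat) + 2 = 2*Suc 0" "(0::nat) + 1 = Suc (2*0)"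
    by simp_all
  show ?thesis
    unfolding Lcoeff_def idx by (simp add: algebra_simps)
qed

lemma Lcoeff_1:
  "Lcoeff a c 1 = - 6 * a * c (Suc (2*Suc 0)) + 2 * (5 + 2*a^2) * c (2*Suc 0) - (8 + 4*a^2) * c (2*0)"
proof -
  have idx: "(1::nat) + 2 = Suc (2*Suc 0)" "(1::nat) + 1 = 2*Suc 0" "(1::nat) - 1 = 2*0"
    by simp_all
  show ?thesis
    unfolding Lcoeff_def idx by (simp add: algebra_simps)
qed

lemma Lcoeff_even:
  "Lcoeff a c (2*p+2) = - a * (2*real p + 4) * (2*real p + 3) * c (2*Suc (Suc p))
     + (2*real p + 3) * (2*real p + 6 + 2*a^2) * c (Suc (2*Suc p))
     - (4*real p + 10 + 4*a^2) * c (Suc (2*p)) + 4 * a * c (2*p)"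
proof -
  have idx: "2*p+2+2 = 2*Suc (Suc p)" "2*p+2+1 = Suc (2*Suc p)" "2*p+2-1 = Suc (2*p)" "2*p+2-2 = 2*p"
    by simp_all
  show ?thesis
    unfolding Lcoeff_def idx by (simp add: algebra_simps)
qed

lemma Lcoeff_odd:
  "Lcoeff a c (2*p+3) = - a * (2*real p + 5) * (2*real p + 4) * c (Suc (2*Suc (Suc p)))
     + (2*real p + 4) * (2*real p + 7 + 2*a^2) * c (2*Suc (Suc p))
     - (4*real p + 12 + 4*a^2) * c (2*Suc p) + 4 * a * c (Suc (2*p))"
proof -
  have idx: "2*p+3+2 = Suc (2*Suc (Suc p))" "2*p+3+1 = 2*Suc (Suc p)" "2*p+3-1 = 2*Suc p" "2*p+3-2 = Suc (2*p)"
    by simp_all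
  show ?thesis
    unfolding Lcoeff_def idx by (simp add: algebra_simps)
qed

definition paired_coeffs :: "real \<Rightarrow> nat \<Rightarrow> (nat \<Rightarrow> real) \<Rightarrow> nat \<Rightarrow> real" where
  "paired_coeffs a k y i = (if 2*k+1 < i then 0 else if even i then fscaled a (i div 2) * y (i div 2)
     else 2 * a * fscaled a (i div 2) * y (Suc (i div 2)))"

lemma paired_coeffs_even: "paired_coeffs a k y (2*j) = (if j \<le> k then fscaled a j * y j else 0)"
  by (simp add: paired_coeffs_def)

lemma paired_coeffs_odd:
  "paired_coeffs a k y (Suc (2*j)) = (if j \<le> k then 2 * a * fscaled a j * y (Suc j) else 0)"
  by (simp add: paired_coeffs_def)

lemma Lcoeff_paired_coeffs:
  assumes "\<forall>j<k. y j = (2*real j + 5 + 2*a^2) * y (Suc j) - (2*real j + 3) * (2*a^2) * y (Suc (Suc j))"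
  shows "Lcoeff a (paired_coeffs a k y) n =
    (if n = 2*k then a * (2*real k + 2) * (2*real k + 1) * fscaled a (Suc k) * y (Suc k)
     else if n = 2*k+1 then - (2*real k + 2) * fscaled a (Suc k) * y k
     else if n = 2*k+2 then 4 * a * fscaled a k * (y k - (2*real k + 5 + 2*a^2) * y (Suc k))
     else if n = 2*k+3 then 8 * a^2 * fscaled a k * y (Suc k)
     else 0)"
proof -
  note rec = assms[rule_format]
  note c = paired_coeffs_even paired_coeffs_odd
  have "n = 0 \<or> n = 1 \<or> (\<exists>p. n = 2*p+2) \<or> (\<exists>p. n = 2*p+3)"
    by presburger
  then consider "n = 0" | "n = 1" | p where "n = 2*p+2" | p where "n = 2*p+3"
    by blast
  then show ?thesis
  proof cases
    case 1
    show ?thesis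
      unfolding 1 Lcoeff_0 c by (cases k) (simp_all add: fscaled_0 fscaled_1 algebra_simps)
  next
    case 2
    show ?thesis
    proof (cases k)
      case 0
      then show ?thesis
        unfolding 2 Lcoeff_1 c by (simp add: fscaled_0 fscaled_1 algebra_simps)
    next
      case (Suc m)
      then have y0: "y 0 = (5 + 2*a^2) * y (Suc 0) - 3 * (2*a^2) * y (Suc (Suc 0))"
        using rec[of 0] by simp
      show ?thesis
        unfolding 2 Lcoeff_1 c y0 using Suc by (simp add: fscaled_0 fscaled_1 algebra_simps power2_eq_square)
    qed
  next
    case (3 p)
    consider "Suc p < k" | "Suc p = k" | "k \<le> p"
      by linarith
    then show ?thesis
    proof cases
      case 1
      then show ?thesis
        unfolding 3 Lcoeff_even c rec[of p, OF Suc_lessD[OF 1]] using fscaled_rec[of p a]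
        by simp algebra
    next
      case 2
      then show ?thesis
        unfolding 3 Lcoeff_even c rec[of p, OF Suc_le_lessD[OF eq_imp_le[OF 2]]] 2[symmetric]
        using fscaled_rec[of p a] by simp algebra
    next
      case 3
      then show ?thesis
        unfolding \<open>n = 2*p+2\<close> Lcoeff_even c by (auto simp: algebra_simps)
    qed
  next
    case (4 p)
    consider "Suc (Suc p) \<le> k" | "Suc p = k" | "k \<le> p"
      by linarith
    then show ?thesis
    proof cases
      case 1
      then show ?thesis
        unfolding 4 Lcoeff_odd c rec[of "Suc p", OF Suc_le_lessD[OF 1]] using fscaled_rec[of p a]
        by simp algebra
    next
      case 2
      then show ?thesis
        unfolding 4 Lcoeff_odd c 2[symmetric] using fscaled_rec[of p a] by simp algebra
    next
      case 3
      then show ?thesis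
        unfolding \<open>n = 2*p+3\<close> Lcoeff_odd c by (auto simp: algebra_simps power2_eq_square)
    qed
  qed
qed

section \<open>The coefficients of q_{2k} and q_{2k+1}\<close>

text \<open>
  For fixed a, k and t = 2a^2, the brackets in \<alpha> and \<beta> are rational in
  \<sigma>_j = \<Sum>_{l=j..k} (2k+1)!!/(2l+3)!! t^(l-j), \<delta>_j = (2k+1)!!/(2j+3)!!, \<pi>_j = t^(k-j) and
  \<omega>_j = \<Sum>_{l=j..k} (l-j) (2k+1)!!/(2l+3)!! t^(l-j); the closed form of \<omega>_j from summation by
  parts (coef_omega_eq) is taken as its definition. Later only their one-step recurrences in j and
  their values at j = k, k+1 are used; \<pi>_j is a quotient so that its recurrence also holds at j = k,
  where t^(k-j) would truncate.
\<close>

definition coef_sigma :: "real \<Rightarrow> nat \<Rightarrow> nat \<Rightarrow> real" where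
  "coef_sigma a k j = odd_dfact k * dfact_sum (2*a^2) j k"

definition coef_delta :: "nat \<Rightarrow> nat \<Rightarrow> real" where
  "coef_delta k j = odd_dfact k / odd_dfact (Suc j)"

definition coef_power :: "real \<Rightarrow> nat \<Rightarrow> nat \<Rightarrow> real" where
  "coef_power a k j = (2*a^2)^k / (2*a^2)^j"

definition coef_omega :: "real \<Rightarrow> nat \<Rightarrow> nat \<Rightarrow> real" where
  "coef_omega a k j = ((2*a^2 - (2*real j + 3)) * coef_sigma a k j + (2*real j + 3) * coef_delta k j
     - 2*a^2 * coef_power a k j / (2*real k + 3)) / 2"

lemma coef_sigma_shift: "j \<le> k \<Longrightarrow> coef_sigma a k j = coef_delta k j + 2*a^2 * coef_sigma a k (Suc j)"
  by (simp add: coef_sigma_def coef_delta_def dfact_sum_shift algebra_simps)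

lemma coef_delta_shift: "coef_delta k j = (2*real j + 5) * coef_delta k (Suc j)"
proof -
  have "odd_dfact (Suc (Suc j)) = (2*real j + 5) * odd_dfact (Suc j)"
    using odd_dfact_Suc[of "Suc j"] by simp
  moreover have "2*real j + 5 \<noteq> 0"
    by linarith
  ultimately show ?thesis
    by (simp add: coef_delta_def)
qed

lemma coef_power_shift: "a \<noteq> 0 \<Longrightarrow> coef_power a k j = 2*a^2 * coef_power a k (Suc j)"
  by (simp add: coef_power_def)

lemma coef_power_eq: "a \<noteq> 0 \<Longrightarrow> j \<le> k \<Longrightarrow> coef_power a k j = (2*a^2)^(k-j)"
  by (simp add: coef_power_def power_diff)

lemma coef_omega_eq:
  assumes "j \<le> k" "a \<noteq> 0"
  shows "coef_omega a k j = odd_dfact k * dfact_sum_lin (2*a^2) j k"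
proof -
  have h1: "(2*real j + 3) * coef_delta k j = odd_dfact k / odd_dfact j"
    by (simp add: coef_delta_def odd_dfact_Suc)
  have h2: "2*a^2 * coef_power a k j / (2*real k + 3) = odd_dfact k * (2*a^2)^(Suc k - j) / odd_dfact (Suc k)"
    using assms by (simp add: coef_power_eq Suc_diff_le odd_dfact_Suc)
  have "2 * coef_omega a k j = (2*a^2 - (2*real j + 3)) * coef_sigma a k j
      + odd_dfact k / odd_dfact j - odd_dfact k * (2*a^2)^(Suc k - j) / odd_dfact (Suc k)"
    unfolding coef_omega_def h1 h2 by (simp add: field_simps)
  also have "\<dots> = odd_dfact k * (2 * dfact_sum_lin (2*a^2) j k)"
    unfolding dfact_sum_lin_closed[OF assms(1)] coef_sigma_def
    by (simp add: field_simps)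
  finally show ?thesis
    by simp
qed

definition beta_odd_factor :: "real \<Rightarrow> nat \<Rightarrow> nat \<Rightarrow> real" where
  "beta_odd_factor a k j = (2*real j + 3) / (2*real k + 3) * coef_power a k j + 2 * coef_omega a k j"

definition beta_even_factor :: "real \<Rightarrow> nat \<Rightarrow> nat \<Rightarrow> real" where
  "beta_even_factor a k j
     = (2*real j + 1) / (2*real k + 3) * coef_power a k j + 2 * (coef_omega a k j + coef_sigma a k j)"

definition alpha_even_factor :: "real \<Rightarrow> nat \<Rightarrow> nat \<Rightarrow> real" where
  "alpha_even_factor a k j = (2*real k + 3 - 2*a^2) * (coef_omega a k j + coef_sigma a k j)
     + (real k + 1 - real j) * 2*a^2 * coef_power a k j / (2*real k + 3)"

definition alpha_odd_factor :: "real \<Rightarrow> nat \<Rightarrow> nat \<Rightarrow> real" where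
  "alpha_odd_factor a k j = (2*real k + 3) * coef_omega a k j / (2*a^2) - coef_omega a k j
     + (real k - real j) * coef_power a k j / (2*real k + 3)"

lemma sum_ratio_factor:
  fixes x :: real
  shows "(\<Sum>l\<in>A. c l * (x / y l) * t l) = x * (\<Sum>l\<in>A. c l * t l / y l)"
  by (simp add: sum_distrib_left mult_ac)

lemma sum_lin_dfact_ratio:
  assumes "j \<le> k" "a \<noteq> 0"
  shows "(\<Sum>l=j..k. real (l-j) * (odd_dfact k / odd_dfact (Suc l)) * (2*a^2)^(l-j))
    = coef_omega a k j"
  unfolding sum_ratio_factor dfact_sum_lin_def[symmetric] coef_omega_eq[OF assms] ..

lemma sum_lin_Suc_dfact_ratio:
  assumes "j \<le> k" "a \<noteq> 0"
  shows "(\<Sum>l=j..k. real (l+1-j) * (odd_dfact k / odd_dfact (Suc l)) * (2*a^2)^(l-j))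
    = coef_omega a k j + coef_sigma a k j"
  unfolding sum_ratio_factor coef_omega_eq[OF assms] coef_sigma_def dfact_sum_lin_def dfact_sum_def
    distrib_left[symmetric] sum.distrib[symmetric]
  by (intro arg_cong[where f = "\<lambda>x. odd_dfact k * x"] sum.cong) (auto simp: of_nat_diff field_simps)

lemma beta_odd_coeff:
  assumes "j \<le> k" "a \<noteq> 0"
  shows "beta a k (2*j+1) = cco a j k * beta_odd_factor a k j"
proof -
  have "\<not> even (2*j+1)" "(2*j+1) div 2 = j"
    by simp_all
  then have "beta a k (2*j+1)
      = cco a j k * (real (2*j+3) / real (2*k+3) * (2*a^2)^(k-j) + 2 * coef_omega a k j)"
    unfolding beta_def Let_def dfact_odd_dfact by (simp only: if_False sum_lin_dfact_ratio[OF assms])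
  with assms show ?thesis
    by (simp add: beta_odd_factor_def coef_power_eq)
qed

lemma beta_even_coeff:
  assumes "j \<le> k" "a \<noteq> 0"
  shows "beta a k (2*j) = a * cco a j k * beta_even_factor a k j"
proof -
  have "even (2*j)" "(2*j) div 2 = j"
    by simp_all
  then have "beta a k (2*j) = a * cco a j k
      * (real (2*j+1) / real (2*k+3) * (2*a^2)^(k-j) + 2 * (coef_omega a k j + coef_sigma a k j))"
    unfolding beta_def Let_def dfact_odd_dfact by (simp only: if_True sum_lin_Suc_dfact_ratio[OF assms])
  with assms show ?thesis
    by (simp add: beta_even_factor_def coef_power_eq)
qed

lemma alpha_even_coeff:
  assumes "j \<le> k" "a \<noteq> 0"
  shows "alpha a k (2*j) = cco a j k * alpha_even_factor a k j"
proof -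
  have s1: "(\<Sum>l=j..k. real (l+1-j) * (odd_dfact (Suc k) / odd_dfact (Suc l)) * (2*a^2)^(l-j))
      = (2*real k + 3) * (coef_omega a k j + coef_sigma a k j)"
    unfolding odd_dfact_Suc[of k] sum_lin_Suc_dfact_ratio[OF assms, symmetric] sum_distrib_left
    by (simp add: mult_ac)
  have s2: "(\<Sum>l=j..k. real (l-j) * (odd_dfact k / odd_dfact l) * (2*a^2)^(l-j))
      = 2*a^2 * (coef_omega a k j + coef_sigma a k j)
        - real (Suc k - j) * (2*a^2)^(Suc k - j) * (odd_dfact k / odd_dfact (Suc k))"
    unfolding sum_ratio_factor dfact_sum_lin_index_down[OF assms(1)] coef_omega_eq[OF assms] coef_sigma_def
    by (simp add: algebra_simps)
  have s3: "real (Suc k - j) * (2*a^2)^(Suc k - j) * (odd_dfact k / odd_dfact (Suc k))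
      = (real k + 1 - real j) * 2*a^2 * coef_power a k j / (2*real k + 3)"
    using assms by (simp add: odd_dfact_div_Suc coef_power_eq Suc_diff_le of_nat_diff)
  have "even (2*j)" "(2*j) div 2 = j"
    by simp_all
  then have "alpha a k (2*j) = cco a j k * ((2*real k + 3) * (coef_omega a k j + coef_sigma a k j)
      - (2*a^2 * (coef_omega a k j + coef_sigma a k j)
        - real (Suc k - j) * (2*a^2)^(Suc k - j) * (odd_dfact k / odd_dfact (Suc k))))"
    unfolding alpha_def Let_def dfact_odd_dfact by (simp only: if_True s1 s2)
  then show ?thesis
    unfolding s3 by (simp add: alpha_even_factor_def algebra_simps)
qed

lemma alpha_odd_coeff:
  assumes "j \<le> k" "a \<noteq> 0"
  shows "alpha a k (2*j+1) = 2 * a * cco a j k * alpha_odd_factor a k j"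
proof -
  have "(\<Sum>l=j..<k. real (l+1-j) * (2*a^2)^(l-j) / odd_dfact (Suc (Suc l)))
      = dfact_sum_lin (2*a^2) j k / (2*a^2)"
    using dfact_sum_lin_index_up[OF assms(1), of "2*a^2"] assms by (simp add: field_simps)
  then have s1: "(\<Sum>l=j..<k. real (l+1-j) * (odd_dfact (Suc k) / odd_dfact (Suc (Suc l))) * (2*a^2)^(l-j))
      = (2*real k + 3) * coef_omega a k j / (2*a^2)"
    unfolding sum_ratio_factor odd_dfact_Suc[of k] coef_omega_eq[OF assms] by simp
  have s2: "(\<Sum>l=j..<k. real (l-j) * (odd_dfact k / odd_dfact (Suc l)) * (2*a^2)^(l-j))
      = coef_omega a k j - real (k-j) * (2*a^2)^(k-j) * (odd_dfact k / odd_dfact (Suc k))"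
    unfolding sum_ratio_factor dfact_sum_lin_lessThan[OF assms(1)] coef_omega_eq[OF assms]
    by (simp add: algebra_simps)
  have s3: "real (k-j) * (2*a^2)^(k-j) * (odd_dfact k / odd_dfact (Suc k))
      = (real k - real j) * coef_power a k j / (2*real k + 3)"
    using assms by (simp add: odd_dfact_div_Suc coef_power_eq of_nat_diff)
  have "\<not> even (2*j+1)" "(2*j+1) div 2 = j"
    by simp_all
  then have "alpha a k (2*j+1) = 2 * a * cco a j k * ((2*real k + 3) * coef_omega a k j / (2*a^2)
      - (coef_omega a k j - real (k-j) * (2*a^2)^(k-j) * (odd_dfact k / odd_dfact (Suc k))))"
    unfolding alpha_def Let_def dfact_odd_dfact by (simp only: if_False s1 s2)
  then show ?thesis
    unfolding s3 by (simp add: alpha_odd_factor_def algebra_simps)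
qed

lemma coef_omega_shift:
  assumes "a \<noteq> 0" "j \<le> k"
  shows "coef_omega a k j = 2*a^2 * (coef_omega a k (Suc j) + coef_sigma a k (Suc j))"
  unfolding coef_omega_def coef_sigma_shift[OF assms(2), of a] coef_delta_shift[of k j]
    coef_power_shift[OF assms(1), of k j]
  by (simp add: algebra_simps add_divide_distrib diff_divide_distrib)

lemma beta_odd_factor_shift:
  assumes "a \<noteq> 0" "j \<le> k"
  shows "beta_odd_factor a k j = 2*a^2 * beta_even_factor a k (Suc j)"
  unfolding beta_odd_factor_def beta_even_factor_def coef_omega_shift[OF assms]
    coef_power_shift[OF assms(1), of k j]
  by (simp add: algebra_simps add_divide_distrib)

lemma alpha_odd_factor_shift:
  assumes "a \<noteq> 0" "j \<le> k"
  shows "alpha_odd_factor a k j = alpha_even_factor a k (Suc j)"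
proof -
  \<comment> \<open>With K = 2k+3 as a variable, \<open>field_simps\<close> sees the denominators as products of atoms.\<close>
  define K where "K = 2 * real k + 3"
  have K: "K \<noteq> 0" "real k = (K - 3) / 2"
    unfolding K_def by simp_all
  show ?thesis
    unfolding alpha_odd_factor_def alpha_even_factor_def coef_omega_shift[OF assms]
      coef_power_shift[OF assms(1), of k j] K(2)
    using assms(1) K(1) by (simp add: field_simps)
qed

lemma beta_even_factor_recurrence:
  assumes "a \<noteq> 0" "j < k"
  shows "beta_even_factor a k j = (2*real j + 5 + 2*a^2) * beta_even_factor a k (Suc j)
    - (2*real j + 3) * (2*a^2) * beta_even_factor a k (Suc (Suc j))"
proof -
  define K where "K = 2 * real k + 3"
  have K: "K \<noteq> 0" "real k = (K - 3) / 2"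
    unfolding K_def by simp_all
  show ?thesis
    unfolding beta_even_factor_def coef_omega_def
      coef_sigma_shift[OF less_imp_le[OF assms(2)], of a] coef_sigma_shift[OF Suc_leI[OF assms(2)], of a]
      coef_delta_shift[of k j] coef_delta_shift[of k "Suc j"]
      coef_power_shift[OF assms(1), of k j] coef_power_shift[OF assms(1), of k "Suc j"] K(2)
    using assms K(1) by (simp add: field_simps)
qed

lemma alpha_even_factor_recurrence:
  assumes "a \<noteq> 0" "j < k"
  shows "alpha_even_factor a k j = (2*real j + 5 + 2*a^2) * alpha_even_factor a k (Suc j)
    - (2*real j + 3) * (2*a^2) * alpha_even_factor a k (Suc (Suc j))"
proof -
  define K where "K = 2 * real k + 3"
  have K: "K \<noteq> 0" "real k = (K - 3) / 2"
    unfolding K_def by simp_all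
  show ?thesis
    unfolding alpha_even_factor_def coef_omega_def
      coef_sigma_shift[OF less_imp_le[OF assms(2)], of a] coef_sigma_shift[OF Suc_leI[OF assms(2)], of a]
      coef_delta_shift[of k j] coef_delta_shift[of k "Suc j"]
      coef_power_shift[OF assms(1), of k j] coef_power_shift[OF assms(1), of k "Suc j"] K(2)
    using assms K(1) by (simp add: field_simps)
qed

lemma coef_top_values:
  assumes "a \<noteq> 0"
  shows "coef_sigma a k k = 1 / (2*real k + 3)" "coef_delta k k = 1 / (2*real k + 3)"
    "coef_power a k k = 1" "coef_sigma a k (Suc k) = 0" "coef_power a k (Suc k) = 1 / (2*a^2)"
  using assms by (simp_all add: coef_sigma_def coef_delta_def coef_power_def dfact_sum_def odd_dfact_Suc)

lemma coef_omega_top: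
  assumes "a \<noteq> 0"
  shows "coef_omega a k k = 0" "coef_omega a k (Suc k) = 0"
proof -
  have "2 * real k + 3 \<noteq> 0"
    by linarith
  then show "coef_omega a k k = 0"
    using assms by (simp add: coef_omega_def coef_top_values field_simps)
  have "coef_delta k k = (2 * real (Suc k) + 3) * coef_delta k (Suc k)"
    using coef_delta_shift[of k k] by simp
  then have "(2 * real (Suc k) + 3) * coef_delta k (Suc k) = 1 / (2*real k + 3)"
    using coef_top_values(2)[OF assms] by simp
  then show "coef_omega a k (Suc k) = 0"
    unfolding coef_omega_def coef_top_values(4,5)[OF assms] using assms by simp
qed

lemma beta_even_factor_top:
  assumes "a \<noteq> 0"
  shows "beta_even_factor a k k = 1" "beta_even_factor a k (Suc k) = 1 / (2*a^2)"
proof -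
  define K where "K = 2 * real k + 3"
  have K: "K \<noteq> 0" "real k = (K - 3) / 2"
    unfolding K_def by simp_all
  with assms show "beta_even_factor a k k = 1" "beta_even_factor a k (Suc k) = 1 / (2*a^2)"
    unfolding beta_even_factor_def coef_omega_top[OF assms] coef_top_values[OF assms] K(2)
    by (simp_all add: field_simps K(2))
qed

lemma alpha_even_factor_top:
  assumes "a \<noteq> 0"
  shows "alpha_even_factor a k k = 1" "alpha_even_factor a k (Suc k) = 0"
proof -
  define K where "K = 2 * real k + 3"
  have K: "K \<noteq> 0" "real k = (K - 3) / 2"
    unfolding K_def by simp_all
  with assms show "alpha_even_factor a k k = 1" "alpha_even_factor a k (Suc k) = 0"
    unfolding alpha_even_factor_def coef_omega_top[OF assms] coef_top_values[OF assms] K(2)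
    by (simp_all add: field_simps K(2))
qed

section \<open>The conjugated operator on polynomials\<close>

definition Lop :: "real \<Rightarrow> complex poly \<Rightarrow> complex poly" where
  "Lop a p = [:- of_real a, 1:] * pderiv (pderiv p) + [:of_real (4 + 2*a^2), 0, -2:] * pderiv p
     + [:0, - of_real (4*a^2 + 8), of_real (4*a):] * p"

lemma Lop_smult: "Lop a (smult c p) = smult c (Lop a p)"
  by (simp add: Lop_def pderiv_smult smult_add_right)

lemma Lop_add: "Lop a (p + q) = Lop a p + Lop a q"
  by (simp only: Lop_def pderiv_add distrib_left add_ac)

lemma Lop_0: "Lop a 0 = 0"
  by (simp add: Lop_def pderiv_0)

lemma Lop_sum: "Lop a (\<Sum>x\<in>A. f x) = (\<Sum>x\<in>A. Lop a (f x))"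
  by (induction A rule: infinite_finite_induct) (simp_all add: Lop_add Lop_0)

lemma has_field_derivative_exp_poly:
  fixes c :: complex
  shows "((\<lambda>\<zeta>. exp (c*\<zeta>) * poly R \<zeta>) has_field_derivative exp (c*z) * poly (smult c R + pderiv R) z) (at z)"
  by (auto intro!: derivative_eq_intros simp: algebra_simps)

lemma deriv_exp_poly:
  fixes c C :: complex
  shows "deriv (\<lambda>\<zeta>. C * (exp (c*\<zeta>) * poly R \<zeta>)) = (\<lambda>\<zeta>. C * (exp (c*\<zeta>) * poly (smult c R + pderiv R) \<zeta>))"
  using DERIV_cmult[OF has_field_derivative_exp_poly, THEN DERIV_imp_deriv] by blast

lemma poly_Lop: "poly (Lop a p) z = (z - of_real a) * poly (pderiv (pderiv p)) z
    + (of_real (4 + 2*a^2) - 2*z^2) * poly (pderiv p) z + (of_real (4*a) * z^2 - of_real (4*a^2 + 8) * z) * poly p z"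
  by (simp add: Lop_def algebra_simps power2_eq_square)

lemma Dop_exp_cube_poly:
  fixes C :: complex
  shows "Dop a (\<lambda>\<zeta>. C * (exp (-2 * of_real a * \<zeta>) * ((\<zeta> - of_real a)^3 * poly P \<zeta>))) z
    = C * exp (-2 * of_real a * z) * ((z - of_real a)^3 * poly (Lop a P) z)"
proof -
  define U :: "complex poly" where "U = [:- of_real a, 1:] ^ 3"
  have U: "poly U z = (z - of_real a)^3" "poly (pderiv U) z = 3 * (z - of_real a)^2"
    "poly (pderiv (pderiv U)) z = 6 * (z - of_real a)"
    unfolding U_def
    by (simp_all add: pderiv_power_Suc numeral_3_eq_3 pderiv_pCons power2_eq_square algebra_simps)
  have cube: "(\<lambda>\<zeta>. C * (exp (-2 * of_real a * \<zeta>) * ((\<zeta> - of_real a)^3 * poly P \<zeta>)))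
      = (\<lambda>\<zeta>. C * (exp (-2 * of_real a * \<zeta>) * poly (U * P) \<zeta>))"
    by (simp add: U_def)
  have d1: "pderiv (U * P) = U * pderiv P + P * pderiv U"
    by (rule pderiv_mult)
  have d2: "pderiv (pderiv (U * P))
      = U * pderiv (pderiv P) + (pderiv U * pderiv P + pderiv U * pderiv P) + P * pderiv (pderiv U)"
    by (simp add: pderiv_mult pderiv_add algebra_simps)
  define u where "u = z - of_real a"
  have z: "z = u + of_real a"
    unfolding u_def by simp
  show ?thesis
    unfolding Dop_def cube deriv_exp_poly poly_Lop pderiv_add pderiv_smult
    unfolding d2
    unfolding d1
    unfolding poly_add poly_smult poly_mult poly_diff U u_def[symmetric]
    unfolding z of_real_add of_real_mult of_real_numeral of_real_power
    by algebra
qed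

lemma coeff_linear_mult: "coeff ([:u, v:] * q) n = u * coeff q n + (if n = 0 then 0 else v * coeff q (n - 1))"
  by (cases n) (simp_all add: coeff_pCons)

lemma coeff_quadratic_mult:
  "coeff ([:u, v, w:] * q) n
    = u * coeff q n + (if n = 0 then 0 else v * coeff q (n - 1)) + (if n \<le> 1 then 0 else w * coeff q (n - 2))"
proof (cases n)
  case (Suc m)
  then show ?thesis
    by (cases m) (simp_all add: coeff_pCons add.assoc)
qed simp

lemma coeff_Lop:
  assumes "\<And>i. coeff p i = of_real (c i)"
  shows "coeff (Lop a p) n = of_real (Lcoeff a c n)"
proof -
  consider "n = 0" | "n = 1" | m where "n = Suc (Suc m)"
    by (metis One_nat_def not0_implies_Suc)
  then show ?thesis
  proof cases
    case 1
    then show ?thesis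
      by (simp add: Lop_def Lcoeff_def coeff_linear_mult coeff_quadratic_mult coeff_pderiv assms
          algebra_simps numeral_2_eq_2)
  next
    case 2
    then show ?thesis
      by (simp add: Lop_def Lcoeff_def coeff_linear_mult coeff_quadratic_mult coeff_pderiv assms
          algebra_simps numeral_eq_Suc)
  next
    case 3
    then show ?thesis
      by (simp add: Lop_def Lcoeff_def coeff_linear_mult coeff_quadratic_mult coeff_pderiv assms
          algebra_simps)
  qed
qed

definition qodd_poly :: "real \<Rightarrow> nat \<Rightarrow> complex poly" where
  "qodd_poly a k = (\<Sum>i\<le>2*k+1. monom (of_real (beta a k i)) i)"

definition qeven_poly :: "real \<Rightarrow> nat \<Rightarrow> complex poly" where
  "qeven_poly a k = (\<Sum>i\<le>2*k. monom (of_real (alpha a k i)) i)"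

definition qodd_image :: "real \<Rightarrow> nat \<Rightarrow> complex poly" where
  "qodd_image a k = monom (of_real ((2*real k + 2) * (2*real k + 1) * ftrunc (k+1) (a^2))) (2*k)
     + monom (of_real (- 2 * a * (2*real k + 2) * ftrunc (k+1) (a^2))) (2*k+1)
     + monom (of_real (- (4*real k + 10) * ftrunc k (a^2))) (2*k+2)
     + monom (of_real (4 * a * ftrunc k (a^2))) (2*k+3)"

definition qeven_image :: "real \<Rightarrow> nat \<Rightarrow> complex poly" where
  "qeven_image a k = monom (of_real (- 8 * (real k + 1) * ftrunc (k+1) (a^2))) (2*k+1)
     + monom (of_real (8 * a * ftrunc k (a^2))) (2*k+2)"

lemma poly_qodd_poly: "poly (qodd_poly a k) z = qodd a k z"
  by (simp add: qodd_poly_def qodd_def poly_sum poly_monom)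

lemma poly_qeven_poly: "poly (qeven_poly a k) z = qeven a k z"
  by (simp add: qeven_poly_def qeven_def poly_sum poly_monom)

lemma coeff_qodd_poly: "coeff (qodd_poly a k) i = of_real (if i \<le> 2*k+1 then beta a k i else 0)"
  by (simp add: qodd_poly_def coeff_sum coeff_monom sum.delta)

lemma coeff_qeven_poly: "coeff (qeven_poly a k) i = of_real (if i \<le> 2*k then alpha a k i else 0)"
  by (simp add: qeven_poly_def coeff_sum coeff_monom sum.delta)

lemma nat_even_odd_cases:
  obtains (even) j where "i = 2*j" | (odd) j where "i = Suc (2*j)"
  by (metis oddE evenE Suc_eq_plus1)

lemma beta_paired:
  assumes "a \<noteq> 0"
  shows "(if i \<le> 2*k+1 then beta a k i else 0) = paired_coeffs a k (\<lambda>j. a * beta_even_factor a k j / fscaled a k) i"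
proof (cases i rule: nat_even_odd_cases)
  case (even j)
  then show ?thesis
    using beta_even_coeff[OF _ assms, of j k]
    by (auto simp: paired_coeffs_even cco_fscaled)
next
  case (odd j)
  then show ?thesis
    using beta_odd_coeff[OF _ assms, of j k] beta_odd_factor_shift[OF assms, of j k]
    by (auto simp: paired_coeffs_odd cco_fscaled power2_eq_square)
qed

lemma alpha_paired:
  assumes "a \<noteq> 0"
  shows "(if i \<le> 2*k then alpha a k i else 0) = paired_coeffs a k (\<lambda>j. alpha_even_factor a k j / fscaled a k) i"
proof (cases i rule: nat_even_odd_cases)
  case (even j)
  then show ?thesis
    using alpha_even_coeff[OF _ assms, of j k]
    by (auto simp: paired_coeffs_even cco_fscaled)
next
  case (odd j)
  then show ?thesis
    using alpha_odd_coeff[OF _ assms, of j k] alpha_odd_factor_shift[OF assms, of j k]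
      alpha_even_factor_top(2)[OF assms, of k]
    by (cases "j = k") (auto simp: paired_coeffs_odd cco_fscaled)
qed

lemma Lop_qodd_poly:
  assumes "a \<noteq> 0"
  shows "smult (of_real (ftrunc k (a^2))) (Lop a (qodd_poly a k)) = qodd_image a k"
proof (rule poly_eqI)
  fix n
  define y where "y = (\<lambda>j. a * beta_even_factor a k j / fscaled a k)"
  have rec: "\<forall>j<k. y j = (2*real j + 5 + 2*a^2) * y (Suc j) - (2*real j + 3) * (2*a^2) * y (Suc (Suc j))"
  proof (intro allI impI)
    fix j
    assume "j < k"
    then show "y j = (2*real j + 5 + 2*a^2) * y (Suc j) - (2*real j + 3) * (2*a^2) * y (Suc (Suc j))"
      unfolding y_def beta_even_factor_recurrence[OF assms \<open>j < k\<close>] by (simp add: field_simps)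
  qed
  have top: "y k = a / fscaled a k" "y (Suc k) = 1 / (2 * a * fscaled a k)"
    using assms by (simp_all add: y_def beta_even_factor_top power2_eq_square)
  have "coeff (Lop a (qodd_poly a k)) n = of_real (Lcoeff a (paired_coeffs a k y) n)"
    by (rule coeff_Lop) (simp only: coeff_qodd_poly beta_paired[OF assms] y_def)
  moreover have "ftrunc k (a^2) * Lcoeff a (paired_coeffs a k y) n =
    (if n = 2*k then (2*real k + 2) * (2*real k + 1) * ftrunc (k+1) (a^2)
     else if n = 2*k+1 then - 2 * a * (2*real k + 2) * ftrunc (k+1) (a^2)
     else if n = 2*k+2 then - (4*real k + 10) * ftrunc k (a^2)
     else if n = 2*k+3 then 4 * a * ftrunc k (a^2) else 0)"
    unfolding Lcoeff_paired_coeffs[OF rec] top using assms ftrunc_sq_nonzero[of k a]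
    by (simp add: fscaled_def field_simps power2_eq_square)
  ultimately show "coeff (smult (of_real (ftrunc k (a^2))) (Lop a (qodd_poly a k))) n = coeff (qodd_image a k) n"
    by (auto simp: qodd_image_def coeff_monom simp flip: of_real_mult)
qed

lemma Lop_qeven_poly:
  assumes "a \<noteq> 0"
  shows "smult (of_real (2 * ftrunc k (a^2))) (Lop a (qeven_poly a k)) = qeven_image a k"
proof (rule poly_eqI)
  fix n
  define y where "y = (\<lambda>j. alpha_even_factor a k j / fscaled a k)"
  have rec: "\<forall>j<k. y j = (2*real j + 5 + 2*a^2) * y (Suc j) - (2*real j + 3) * (2*a^2) * y (Suc (Suc j))"
  proof (intro allI impI)
    fix j
    assume "j < k"
    then show "y j = (2*real j + 5 + 2*a^2) * y (Suc j) - (2*real j + 3) * (2*a^2) * y (Suc (Suc j))"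
      unfolding y_def alpha_even_factor_recurrence[OF assms \<open>j < k\<close>] by (simp add: field_simps)
  qed
  have top: "y k = 1 / fscaled a k" "y (Suc k) = 0"
    using assms by (simp_all add: y_def alpha_even_factor_top)
  have "coeff (Lop a (qeven_poly a k)) n = of_real (Lcoeff a (paired_coeffs a k y) n)"
    by (rule coeff_Lop) (simp only: coeff_qeven_poly alpha_paired[OF assms] y_def)
  moreover have "2 * ftrunc k (a^2) * Lcoeff a (paired_coeffs a k y) n =
    (if n = 2*k+1 then - 8 * (real k + 1) * ftrunc (k+1) (a^2)
     else if n = 2*k+2 then 8 * a * ftrunc k (a^2) else 0)"
    unfolding Lcoeff_paired_coeffs[OF rec] top using assms ftrunc_sq_nonzero[of k a]
    by (simp add: fscaled_def field_simps)
  ultimately show "coeff (smult (of_real (2 * ftrunc k (a^2))) (Lop a (qeven_poly a k))) n = coeff (qeven_image a k) n"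
    by (auto simp: qeven_image_def coeff_monom simp flip: of_real_mult)
qed

lemma Dop_cube_exp_sum:
  fixes p Q :: "nat \<Rightarrow> complex poly" and r \<mu> :: "nat \<Rightarrow> complex" and T :: "nat \<Rightarrow> complex \<Rightarrow> complex"
  assumes L: "\<And>k. smult (\<mu> k) (Lop a (p k)) = Q k" and \<mu>: "\<And>k. \<mu> k \<noteq> 0"
    and T: "\<And>k. ((\<lambda>\<zeta>. exp (- 2 * \<zeta> * of_real a) * T k \<zeta>) has_field_derivative
      exp (- 2 * z * of_real a) * poly (Q k) z) (at z)"
    and z: "z \<noteq> of_real a" and w: "w \<noteq> of_real a"
  shows "8 * exp (2 * w * of_real a) / ((z - of_real a)^3 * (w - of_real a)^3)
      * Dop a (\<lambda>\<zeta>. ((\<zeta> - of_real a) * (w - of_real a))^3 * exp (- 2 * (\<zeta> + w) * of_real a)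
          * (\<Sum>k<N. poly (p k) \<zeta> * r k)) z
    = deriv (\<lambda>\<zeta>. exp (- 2 * \<zeta> * of_real a) * (\<Sum>k<N. 8 * r k / \<mu> k * T k \<zeta>)) z"
proof -
  define P where "P = (\<Sum>k<N. smult (r k) (p k))"
  define C where "C = (w - of_real a)^3 * exp (- 2 * w * of_real a)"
  have e: "exp (- 2 * (\<zeta> + w) * of_real a) = exp (-2 * of_real a * \<zeta>) * exp (- 2 * w * of_real a)" for \<zeta>
    by (simp add: algebra_simps flip: exp_add)
  have G: "(\<lambda>\<zeta>. ((\<zeta> - of_real a) * (w - of_real a))^3 * exp (- 2 * (\<zeta> + w) * of_real a)
          * (\<Sum>k<N. poly (p k) \<zeta> * r k))
      = (\<lambda>\<zeta>. C * (exp (-2 * of_real a * \<zeta>) * ((\<zeta> - of_real a)^3 * poly P \<zeta>)))"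
    unfolding e by (simp add: fun_eq_iff C_def P_def poly_sum power_mult_distrib sum_distrib_left mult_ac)
  have LP: "poly (Lop a P) z = (\<Sum>k<N. r k / \<mu> k * poly (Q k) z)"
    using \<mu> by (simp add: P_def Lop_sum Lop_smult poly_sum flip: L)
  have ew: "exp (2 * w * of_real a) = 1 / exp (- 2 * w * of_real a)"
    by (simp add: exp_minus divide_inverse)
  have lhs: "8 * exp (2 * w * of_real a) / ((z - of_real a)^3 * (w - of_real a)^3)
      * Dop a (\<lambda>\<zeta>. ((\<zeta> - of_real a) * (w - of_real a))^3 * exp (- 2 * (\<zeta> + w) * of_real a)
          * (\<Sum>k<N. poly (p k) \<zeta> * r k)) z
    = exp (- 2 * z * of_real a) * (\<Sum>k<N. 8 * r k / \<mu> k * poly (Q k) z)"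
    unfolding G Dop_exp_cube_poly LP C_def ew using z w
    by (simp add: sum_distrib_left field_simps)
  have "((\<lambda>\<zeta>. \<Sum>k<N. 8 * r k / \<mu> k * (exp (- 2 * \<zeta> * of_real a) * T k \<zeta>)) has_field_derivative
      (\<Sum>k<N. 8 * r k / \<mu> k * (exp (- 2 * z * of_real a) * poly (Q k) z))) (at z)"
    by (intro DERIV_sum DERIV_cmult T)
  then have "deriv (\<lambda>\<zeta>. exp (- 2 * \<zeta> * of_real a) * (\<Sum>k<N. 8 * r k / \<mu> k * T k \<zeta>)) z
      = exp (- 2 * z * of_real a) * (\<Sum>k<N. 8 * r k / \<mu> k * poly (Q k) z)"
    by (simp add: sum_distrib_left DERIV_imp_deriv mult_ac)
  with lhs show ?thesis
    by simp
qed

section \<open>Primitives of the right-hand sides\<close>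

lemma has_field_derivative_etrunc:
  fixes x :: complex
  shows "(etrunc (Suc n) has_field_derivative etrunc n x) (at x)"
proof (induction n)
  case 0
  have "etrunc (Suc 0) = (\<lambda>y::complex. 1 + y)"
    by (rule ext) (simp add: etrunc_def)
  then show ?case
    by (auto intro!: derivative_eq_intros simp: etrunc_def)
next
  case (Suc n)
  have "((\<lambda>y. y^Suc (Suc n) / of_nat (fact (Suc (Suc n)))) has_field_derivative x^Suc n / of_nat (fact (Suc n))) (at x)"
  proof -
    have "((\<lambda>y. y^Suc (Suc n) / of_nat (fact (Suc (Suc n)))) has_field_derivative
        (1 + of_nat (Suc n)) * (1 * x^Suc n) / of_nat (fact (Suc (Suc n)))) (at x)"
      by (rule DERIV_cdivide[OF DERIV_power_Suc[OF DERIV_ident]])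
    moreover have "(1 + of_nat (Suc n)) * (1 * x^Suc n) / of_nat (fact (Suc (Suc n))) = x^Suc n / of_nat (fact (Suc n))"
    proof -
      have "of_nat (fact (Suc (Suc n))) = (of_nat (Suc (Suc n)) :: complex) * of_nat (fact (Suc n))"
        by (simp only: fact_Suc[of "Suc n"] of_nat_mult of_nat_id)
      moreover have "(1 + of_nat (Suc n) :: complex) = of_nat (Suc (Suc n))"
        by (simp only: of_nat_Suc[of "Suc n"] add.commute)
      moreover have "(of_nat (Suc (Suc n)) :: complex) \<noteq> 0"
        by (rule of_nat_neq_0)
      ultimately show ?thesis
        by (simp del: of_nat_Suc fact_Suc)
    qed
    ultimately show ?thesis
      by simp
  qed
  from DERIV_add[OF Suc.IH this] show ?case
    by (simp add: etrunc_Suc[of "Suc n"] etrunc_Suc[of n x] fun_eq_iff)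
qed

lemma has_field_derivative_exp_etrunc:
  fixes A :: complex
  shows "((\<lambda>\<zeta>. exp (- 2 * \<zeta> * A) * etrunc n (2 * \<zeta> * A)) has_field_derivative
    - 2 * A * exp (- 2 * z * A) * (2 * z * A)^n / of_nat (fact n)) (at z)"
proof (cases n)
  case 0
  then show ?thesis
    by (auto intro!: derivative_eq_intros simp: etrunc_def)
next
  case (Suc m)
  have "((\<lambda>\<zeta>. etrunc (Suc m) (2 * \<zeta> * A)) has_field_derivative etrunc m (2 * z * A) * (2 * A)) (at z)"
    by (rule DERIV_chain2[OF has_field_derivative_etrunc]) (auto intro!: derivative_eq_intros)
  then have "((\<lambda>\<zeta>. exp (- 2 * \<zeta> * A) * etrunc (Suc m) (2 * \<zeta> * A)) has_field_derivative
      2 * A * exp (- 2 * z * A) * (etrunc m (2 * z * A) - etrunc (Suc m) (2 * z * A))) (at z)"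
    by (auto intro!: derivative_eq_intros simp: algebra_simps)
  then show ?thesis
    using Suc by (simp add: etrunc_Suc[of m])
qed

lemma has_field_derivative_exp_etrunc_scaled:
  fixes A :: complex
  assumes "A \<noteq> 0"
  shows "((\<lambda>\<zeta>. of_real (fact n) / (2*A)^(n+1) * (exp (- 2 * \<zeta> * A) * etrunc n (2 * \<zeta> * A)))
    has_field_derivative - exp (- 2 * z * A) * z^n) (at z)"
proof -
  have "of_real (fact n) / (2*A)^(n+1) * (- 2 * A * exp (- 2 * z * A) * (2 * z * A)^n / of_nat (fact n))
      = - exp (- 2 * z * A) * z^n"
    using assms by (simp add: power_mult_distrib field_simps)
  with DERIV_cmult[OF has_field_derivative_exp_etrunc, of "of_real (fact n) / (2*A)^(n+1)" A n z]
  show ?thesis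
    by simp
qed

definition qodd_primitive :: "real \<Rightarrow> nat \<Rightarrow> complex \<Rightarrow> complex" where
  "qodd_primitive a k \<zeta> = 4 * of_real (ftrunc k (a^2)) * of_real (fact (2*k+2))
       * etrunc (2*k+2) (2 * \<zeta> * of_real a) / (2 * of_real a) ^ (2*k+3)
     + of_nat (2*k+2) * of_real (ftrunc (k+1) (a^2)) * \<zeta> ^ (2*k+1)
     - 2 * of_real (ftrunc k (a^2)) * \<zeta> ^ (2*k+3)"

definition qeven_primitive :: "real \<Rightarrow> nat \<Rightarrow> complex \<Rightarrow> complex" where
  "qeven_primitive a k \<zeta> = 8 * of_real (fact (2*k+2)) * of_real a * of_real (etrunc (k+1) (a^2))
       / (2 * of_real a) ^ (2*k+3) * etrunc (2*k+2) (2 * \<zeta> * of_real a)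
     - 4 * of_real (ftrunc (k+1) (a^2)) * \<zeta> ^ (2*k+2)"

lemma has_field_derivative_exp_power:
  fixes A :: complex
  shows "((\<lambda>\<zeta>. exp (- 2 * \<zeta> * A) * \<zeta>^n) has_field_derivative
    exp (- 2 * z * A) * (of_nat n * z^(n - 1) - 2 * A * z^n)) (at z)"
  by (auto intro!: derivative_eq_intros simp: algebra_simps)

lemma has_field_derivative_qodd_primitive:
  assumes "a \<noteq> 0"
  shows "((\<lambda>\<zeta>. exp (- 2 * \<zeta> * of_real a) * qodd_primitive a k \<zeta>) has_field_derivative
    exp (- 2 * z * of_real a) * poly (qodd_image a k) z) (at z)"
proof -
  define A where "A = (of_real a :: complex)"
  define f0 where "f0 = (of_real (ftrunc k (a^2)) :: complex)"
  define f1 where "f1 = (of_real (ftrunc (k+1) (a^2)) :: complex)"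
  have A: "A \<noteq> 0"
    using assms by (simp add: A_def)
  have e: "2*k+2+1 = 2*k+3"
    by simp
  have "(\<lambda>\<zeta>. exp (- 2 * \<zeta> * A) * qodd_primitive a k \<zeta>)
      = (\<lambda>\<zeta>. 4 * f0 * (of_real (fact (2*k+2)) / (2*A)^(2*k+3)
              * (exp (- 2 * \<zeta> * A) * etrunc (2*k+2) (2 * \<zeta> * A)))
           + of_nat (2*k+2) * f1 * (exp (- 2 * \<zeta> * A) * \<zeta> ^ (2*k+1))
           - 2 * f0 * (exp (- 2 * \<zeta> * A) * \<zeta> ^ (2*k+3)))"
    by (simp add: qodd_primitive_def A_def f0_def f1_def fun_eq_iff algebra_simps)
  moreover note DERIV_diff[OF DERIV_add[OF
      DERIV_cmult[OF has_field_derivative_exp_etrunc_scaled[OF A, of "2*k+2" z, unfolded e], where c = "4 * f0"]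
      DERIV_cmult[OF has_field_derivative_exp_power[of A "2*k+1" z], where c = "of_nat (2*k+2) * f1"]]
      DERIV_cmult[OF has_field_derivative_exp_power[of A "2*k+3" z], where c = "2 * f0"]]
  ultimately show ?thesis
    unfolding A_def
    by (auto elim!: DERIV_cong simp: qodd_image_def poly_monom f0_def f1_def algebra_simps)
qed

lemma has_field_derivative_qeven_primitive:
  assumes "a \<noteq> 0"
  shows "((\<lambda>\<zeta>. exp (- 2 * \<zeta> * of_real a) * qeven_primitive a k \<zeta>) has_field_derivative
    exp (- 2 * z * of_real a) * poly (qeven_image a k) z) (at z)"
proof -
  define A where "A = (of_real a :: complex)"
  define f1 where "f1 = (of_real (ftrunc (k+1) (a^2)) :: complex)"
  define E where "E = (of_real (etrunc (k+1) (a^2)) :: complex)"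
  have A: "A \<noteq> 0"
    using assms by (simp add: A_def)
  have e: "2*k+2+1 = 2*k+3"
    by simp
  have "(\<lambda>\<zeta>. exp (- 2 * \<zeta> * A) * qeven_primitive a k \<zeta>)
      = (\<lambda>\<zeta>. 8 * A * E * (of_real (fact (2*k+2)) / (2*A)^(2*k+3)
              * (exp (- 2 * \<zeta> * A) * etrunc (2*k+2) (2 * \<zeta> * A)))
           - 4 * f1 * (exp (- 2 * \<zeta> * A) * \<zeta> ^ (2*k+2)))"
    by (simp add: qeven_primitive_def A_def E_def f1_def fun_eq_iff algebra_simps)
  moreover note DERIV_diff[OF
      DERIV_cmult[OF has_field_derivative_exp_etrunc_scaled[OF A, of "2*k+2" z, unfolded e], where c = "8 * A * E"]
      DERIV_cmult[OF has_field_derivative_exp_power[of A "2*k+2" z], where c = "4 * f1"]]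
  moreover have "E = f1 - of_real (ftrunc k (a^2))"
    unfolding E_def f1_def using ftrunc_Suc[of k "a^2"] by simp
  ultimately show ?thesis
    unfolding A_def
    by (auto elim!: DERIV_cong simp: qeven_image_def poly_monom f1_def algebra_simps)
qed

lemma rpre_weight:
  fixes q :: complex
  shows "8 * (q / of_real (rpre a k)) / of_real (ftrunc k (a^2))
      = 2 ^ (2*k+5) * q / (of_real (fact (2*k+2)) * of_real (ftrunc (k+1) (a^2)))"
    "8 * (q / of_real (rpre a k)) / of_real (2 * ftrunc k (a^2))
      = 2 ^ (2*k+4) * q / (of_real (fact (2*k+2)) * of_real (ftrunc (k+1) (a^2)))"
proof -
  define F where "F = (of_real (fact (2*k+2)) * of_real (ftrunc (k+1) (a^2)) :: complex)"
  have "rpre a k * ftrunc k (a^2) = fact (2*k+2) * ftrunc (k+1) (a^2) / 2^(2*k+2)"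
    using ftrunc_sq_nonzero[of k a] by (simp add: rpre_def)
  then have RF: "(of_real (rpre a k) :: complex) * of_real (ftrunc k (a^2)) = F / 2^(2*k+2)"
    unfolding F_def by (metis of_real_divide of_real_mult of_real_numeral of_real_power)
  have "F \<noteq> 0"
    unfolding F_def by (metis fact_nonzero mult_eq_0_iff of_real_eq_0_iff ftrunc_sq_nonzero)
  moreover have "(2::complex) ^ (2*k+5) = 8 * 2^(2*k+2)" "(2::complex) ^ (2*k+4) = 4 * 2^(2*k+2)"
    by (simp_all add: power_add numeral_eq_Suc)
  ultimately have "8 * q / (F / 2^(2*k+2)) = 2 ^ (2*k+5) * q / F" "4 * q / (F / 2^(2*k+2)) = 2 ^ (2*k+4) * q / F"
    by simp_all
  moreover have "8 * (q / of_real (rpre a k)) / of_real (ftrunc k (a^2)) = 8 * q / (F / 2^(2*k+2))"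
    "8 * (q / of_real (rpre a k)) / of_real (2 * ftrunc k (a^2)) = 4 * q / (F / 2^(2*k+2))"
    unfolding RF[symmetric] by simp_all
  ultimately show "8 * (q / of_real (rpre a k)) / of_real (ftrunc k (a^2)) = 2 ^ (2*k+5) * q / F"
    "8 * (q / of_real (rpre a k)) / of_real (2 * ftrunc k (a^2)) = 2 ^ (2*k+4) * q / F"
    by simp_all
qed

theorem lemma4p3:
  fixes a :: real and N :: nat and z w :: complex
  assumes "a \<noteq> 0" and "N \<ge> 1" and "z \<noteq> of_real a" and "w \<noteq> of_real a"
  shows "(8 * exp (2 * w * of_real a) / ((z - of_real a)^3 * (w - of_real a)^3)
           * Dop a (\<lambda>\<zeta>. Ghat a N \<zeta> w) z
         = deriv (\<lambda>\<zeta>. exp (- 2 * \<zeta> * of_real a) *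
             (\<Sum>k<N. 2 ^ (2*k+5) * qeven a k w
                 / (of_real (fact (2*k+2)) * of_real (ftrunc (k+1) (a^2)))
                 * (4 * of_real (ftrunc k (a^2)) * of_real (fact (2*k+2))
                       * etrunc (2*k+2) (2 * \<zeta> * of_real a) / (2 * of_real a) ^ (2*k+3)
                    + of_nat (2*k+2) * of_real (ftrunc (k+1) (a^2)) * \<zeta> ^ (2*k+1)
                    - 2 * of_real (ftrunc k (a^2)) * \<zeta> ^ (2*k+3)))) z) \<and>
         (8 * exp (2 * w * of_real a) / ((z - of_real a)^3 * (w - of_real a)^3)
           * Dop a (\<lambda>\<zeta>. Ghat a N w \<zeta>) z
         = deriv (\<lambda>\<zeta>. exp (- 2 * \<zeta> * of_real a) *
             (\<Sum>k<N. 2 ^ (2*k+4) * qodd a k w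
                 / (of_real (fact (2*k+2)) * of_real (ftrunc (k+1) (a^2)))
                 * (8 * of_real (fact (2*k+2)) * of_real a * of_real (etrunc (k+1) (a^2))
                       / (2 * of_real a) ^ (2*k+3) * etrunc (2*k+2) (2 * \<zeta> * of_real a)
                    - 4 * of_real (ftrunc (k+1) (a^2)) * \<zeta> ^ (2*k+2)))) z)"
proof -
  have nonzero: "(of_real (ftrunc k (a^2)) :: complex) \<noteq> 0" "(of_real (2 * ftrunc k (a^2)) :: complex) \<noteq> 0"
    for k
    using ftrunc_sq_nonzero by simp_all
  have G1: "(\<lambda>\<zeta>. Ghat a N \<zeta> w) = (\<lambda>\<zeta>. ((\<zeta> - of_real a) * (w - of_real a))^3 * exp (- 2 * (\<zeta> + w) * of_real a)
      * (\<Sum>k<N. poly (qodd_poly a k) \<zeta> * (qeven a k w / of_real (rpre a k))))"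
    by (simp add: Ghat_def poly_qodd_poly)
  have odd: "8 * exp (2 * w * of_real a) / ((z - of_real a)^3 * (w - of_real a)^3) * Dop a (\<lambda>\<zeta>. Ghat a N \<zeta> w) z
      = deriv (\<lambda>\<zeta>. exp (- 2 * \<zeta> * of_real a)
          * (\<Sum>k<N. 8 * (qeven a k w / of_real (rpre a k)) / of_real (ftrunc k (a^2)) * qodd_primitive a k \<zeta>)) z"
    unfolding G1 by (rule Dop_cube_exp_sum[OF Lop_qodd_poly[OF assms(1)] nonzero(1)
        has_field_derivative_qodd_primitive[OF assms(1)] assms(3,4)])
  have G2: "(\<lambda>\<zeta>. Ghat a N w \<zeta>) = (\<lambda>\<zeta>. ((\<zeta> - of_real a) * (w - of_real a))^3 * exp (- 2 * (\<zeta> + w) * of_real a)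
      * (\<Sum>k<N. poly (qeven_poly a k) \<zeta> * (qodd a k w / of_real (rpre a k))))"
    by (simp add: Ghat_def poly_qeven_poly mult_ac add_ac)
  have even: "8 * exp (2 * w * of_real a) / ((z - of_real a)^3 * (w - of_real a)^3) * Dop a (\<lambda>\<zeta>. Ghat a N w \<zeta>) z
      = deriv (\<lambda>\<zeta>. exp (- 2 * \<zeta> * of_real a)
          * (\<Sum>k<N. 8 * (qodd a k w / of_real (rpre a k)) / of_real (2 * ftrunc k (a^2)) * qeven_primitive a k \<zeta>)) z"
    unfolding G2 by (rule Dop_cube_exp_sum[OF Lop_qeven_poly[OF assms(1)] nonzero(2)
        has_field_derivative_qeven_primitive[OF assms(1)] assms(3,4)])
  from odd even show ?thesis
    unfolding rpre_weight qodd_primitive_def qeven_primitive_def by (rule conjI)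
qed

end
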